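(* Let $\mathcal A=\{a_1,\dots,a_n\}\subset\mathbb Z^d$ with $n\ge d+2$ and $d$-dimensional convex hull, and let $C=(c_{ij})\in\mathbb R^{d\times n}$. Assume there are $p$ $d$-simplices $\Delta_1,\dots,\Delta_p$ of $\mathcal A$ which are part of a (common) regular subdivision of $\mathcal A$ and are positively decorated by $C$. Let $m_1,\dots,m_\ell\in\mathbb R^n$ be vectors such that \[ \mathcal C_{\Delta_1,\dots,\Delta_p}=\{h\in\mathbb R^n:\ \langle m_r,h\rangle>0,\ r=1,\dots,\ell\}, \] where $\mathcal C_{\Delta_1,\dots,\Delta_p}$ is the cone of all height vectors inducing a regular subdivision of $\mathcal A$ containing $\Delta_1,\dots,\Delta_p$. Then for any $\varepsilon\in(0,1)^\ell$ there exists $t_0(\varepsilon)>0$ such that for any $\gamma$ in the open set \[ U=\bigcup_{\varepsilon\in(0,1)^\ell}\{\gamma\in\mathbb R^n_{>0}:\ \gamma^{m_r}<t_0(\varepsilon)^{\varepsilon_r},\ r=1,\dots,\ell\}, \] the system \[ \sum_{j=1}^n c_{ij}\,\gamma_j\,x^{a_j}=0,\qquad i=1,\dots,d, \] has at least $p$ nondegenerate solutions in the positive orthant $\mathbb R^d_{>0}$. In particular, when $p=2$ and the two positively decorated $d$-simplices share a facet, this system has at least $2$ nondegenerate positive solutions for all $\gamma\in U$.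
   Context: $\gamma^{m}=\prod_k\gamma_k^{m_k}$. A $d$-simplex of $\mathcal A$ is a subset of $d+1$ affinely independent points. Regular subdivisions: for $h\in\mathbb R^n$ lift $a_j$ to $(a_j,h_j)\in\mathbb R^{d+1}$; lower faces of the convex hull of the lifted points are those with an inner normal of positive last coordinate; each lower face $F$ gives the cell $\{a_j:(a_j,h_j)\in F\}$; the collection of cells is the regular subdivision induced by $h$, and a simplex is part of it if it is one of its cells. Two $d$-simplices share a facet if the intersection of their convex hulls is a facet of both. A real $d\times(d+1)$ matrix $M$ is positively spanning if the numbers $(-1)^i\mathrm{minor}(M,i)$ are all nonzero of the same sign, $\mathrm{minor}(M,i)$ being the determinant after deleting column $i$. A $d$-simplex $\{a_{i_1},\dots,a_{i_{d+1}}\}$ is positively decorated by $C$ if the submatrix of $C$ with columns $i_1,\dots,i_{d+1}$ is positively spanning. A solution is nondegenerate if the Jacobian determinant of the system does not vanish at it. *)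

theory Defs
  imports "HOL-Analysis.Analysis"
begin

definition real_pt :: "int^'d::finite \<Rightarrow> real^'d" where
  "real_pt a = (\<chi> k. real_of_int (a $ k))"

definition monom :: "real^'d \<Rightarrow> int^'d \<Rightarrow> real" where
  "monom x a = (\<Prod>k\<in>UNIV. (x $ k) powi (a $ k))"

definition is_simplex :: "nat \<Rightarrow> (nat \<Rightarrow> int^'d) \<Rightarrow> nat set \<Rightarrow> bool" where
  "is_simplex n a S \<longleftrightarrow> S \<subseteq> {..<n} \<and> card S = CARD('d) + 1 \<and>
      \<not> affine_dependent (real_pt ` a ` S)"

definition lower_face :: "((real^'d) \<times> real) set \<Rightarrow> ((real^'d) \<times> real) set \<Rightarrow> bool" where
  "lower_face P F \<longleftrightarrow> F face_of P \<and> F \<noteq> {} \<and>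
     (\<exists>u u0. u0 > 0 \<and> F = {z \<in> P. \<forall>y\<in>P. inner (u, u0) z \<le> inner (u, u0) y})"

definition lifted_hull :: "nat \<Rightarrow> (nat \<Rightarrow> int^'d) \<Rightarrow> (nat \<Rightarrow> real) \<Rightarrow> ((real^'d) \<times> real) set" where
  "lifted_hull n a h = convex hull ((\<lambda>j. (real_pt (a j), h j)) ` {..<n})"

definition in_regular_subdivision ::
  "nat \<Rightarrow> (nat \<Rightarrow> int^'d) \<Rightarrow> (nat \<Rightarrow> real) \<Rightarrow> nat set \<Rightarrow> bool" where
  "in_regular_subdivision n a h S \<longleftrightarrow>
     (\<exists>F. lower_face (lifted_hull n a h) F \<and> S = {j. j < n \<and> (real_pt (a j), h j) \<in> F})"

definition enum_idx :: "'d::finite \<Rightarrow> nat" where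
  "enum_idx = (SOME f. bij_betw f (UNIV::'d set) {..<CARD('d)})"

definition minor :: "(real^'d) list \<Rightarrow> nat \<Rightarrow> real" where
  "minor cs i = (let ds = take i cs @ drop (Suc i) cs in
      det (\<chi> r c. (ds ! enum_idx c) $ r :: real^'d^'d))"

definition positively_spanning :: "(real^'d) list \<Rightarrow> bool" where
  "positively_spanning cs \<longleftrightarrow> length cs = CARD('d) + 1 \<and>
     ((\<forall>i\<le>CARD('d). (-1) ^ i * minor cs i > 0) \<or> (\<forall>i\<le>CARD('d). (-1) ^ i * minor cs i < 0))"

text \<open>Simplex S positively decorated by C (C given by its columns C j, j < n).\<close>
definition positively_decorated :: "(nat \<Rightarrow> real^'d) \<Rightarrow> nat set \<Rightarrow> bool" where
  "positively_decorated C S \<longleftrightarrow> positively_spanning (map C (sorted_list_of_set S))"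

definition system :: "nat \<Rightarrow> (nat \<Rightarrow> int^'d) \<Rightarrow> (nat \<Rightarrow> real^'d) \<Rightarrow> (nat \<Rightarrow> real) \<Rightarrow> real^'d \<Rightarrow> real^'d" where
  "system n a C \<gamma> x = (\<chi> i. \<Sum>j<n. (C j $ i) * \<gamma> j * monom x (a j))"

definition nondegenerate_positive_solution ::
  "nat \<Rightarrow> (nat \<Rightarrow> int^'d) \<Rightarrow> (nat \<Rightarrow> real^'d) \<Rightarrow> (nat \<Rightarrow> real) \<Rightarrow> real^'d \<Rightarrow> bool" where
  "nondegenerate_positive_solution n a C \<gamma> x \<longleftrightarrow>
     (\<forall>k. x $ k > 0) \<and> system n a C \<gamma> x = 0 \<and>
     (\<exists>f'. (system n a C \<gamma> has_derivative f') (at x) \<and> det (matrix f') \<noteq> 0)"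

end

theory Submission
  imports Defs
begin

text \<open>Write \<open>\<gamma>\<^sub>j = exp (- h\<^sub>j)\<close>. If every \<open>\<langle>m\<^sub>r, h\<rangle>\<close> is large, then \<open>h\<close> lies so deep inside
  the cone that lowering any single height by a large \<open>L\<close> keeps every \<open>\<Delta>\<^sub>k\<close> a cell; hence all
  lifted points off \<open>\<Delta>\<^sub>k\<close> lie at least \<open>L\<close> above the affine function supporting \<open>\<Delta>\<^sub>k\<close>.
  In logarithmic coordinates the system is then \<open>\<Sum>\<^sub>j\<^sub>\<in>\<^sub>\<Delta>\<^sub>k exp \<langle>a\<^sub>j, z\<rangle> c\<^sub>j = 0\<close> perturbed by
  terms of size \<open>exp (- L)\<close>. Positive decoration makes \<open>- c\<^sub>j\<^sub>0\<close> a positive combination of the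
  other columns of \<open>\<Delta>\<^sub>k\<close>, so the truncated system has a zero, which survives the perturbation by
  Brouwer's fixed point theorem. The Jacobian there stays invertible, and the terms of \<open>\<Delta>\<^sub>k\<close>
  dominate all others at this zero, so distinct simplices give distinct solutions.\<close>

section \<open>Matrices and positive spanning\<close>

lemma enum_idx_bij: "bij_betw (enum_idx :: 'd::finite \<Rightarrow> nat) UNIV {..<CARD('d)}"
proof -
  have "\<exists>f :: 'd \<Rightarrow> nat. bij_betw f UNIV {..<CARD('d)}"
    using ex_bij_betw_finite_nat[of "UNIV::'d set"] by (auto simp: atLeast0LessThan)
  then show ?thesis unfolding enum_idx_def by (rule someI_ex)
qed

lemma enum_idx_eq_iff [simp]: "enum_idx (x::'d::finite) = enum_idx y \<longleftrightarrow> x = y"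
  using enum_idx_bij[where 'd='d] unfolding bij_betw_def inj_on_def by auto

lemma enum_idx_less [simp]: "enum_idx (x::'d::finite) < CARD('d)"
  using enum_idx_bij[where 'd='d] unfolding bij_betw_def by auto

lemma enum_idx_surj: "k < CARD('d) \<Longrightarrow> \<exists>x::'d::finite. enum_idx x = k"
  using enum_idx_bij[where 'd='d] unfolding bij_betw_def by (metis imageE lessThan_iff)

lemma matrix_vector_mult_uminus: "(A::'a::ring_1^'n^'m) *v (- x) = - (A *v x)"
  by (metis diff_0 matrix_vector_mult_diff_distrib matrix_vector_mult_0_right)

lemma matrix_inv_mult_cancel:
  assumes "invertible (A::'a::field^'n^'n)"
  shows "matrix_inv A *v (A *v x) = x" and "A *v (matrix_inv A *v y) = y"
proof -
  have "A ** matrix_inv A = mat 1 \<and> matrix_inv A ** A = mat 1"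
    using assms unfolding invertible_def matrix_inv_def by (rule someI_ex)
  then show "matrix_inv A *v (A *v x) = x" and "A *v (matrix_inv A *v y) = y"
    by (simp_all add: matrix_vector_mul_assoc)
qed

lemma matrix_vector_mult_norm_le:
  "norm ((A::real^'n::finite^'m::finite) *v x) \<le> onorm ((*v) A) * norm x"
  by (rule onorm[OF matrix_vector_mul_bounded_linear])

lemma continuous_on_matrix_vector_mult [continuous_intros]:
  "continuous_on S f \<Longrightarrow> continuous_on S (\<lambda>x. (A::real^'n::finite^'m::finite) *v f x)"
  by (rule bounded_linear.continuous_on[OF matrix_vector_mul_bounded_linear])

definition cols_matrix :: "(real^'d::finite) list \<Rightarrow> real^'d^'d" where
  "cols_matrix ds = (\<chi> r c. (ds ! enum_idx c) $ r)"

lemma minor_eq_det_cols_matrix: "minor cs i = det (cols_matrix (take i cs @ drop (Suc i) cs))"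
  unfolding minor_def cols_matrix_def Let_def by simp

lemma cols_matrix_mult: "cols_matrix ds *v y = (\<Sum>c\<in>UNIV. y $ c *\<^sub>R ds ! enum_idx c)"
  unfolding matrix_mult_sum cols_matrix_def column_def
  by (simp add: scalar_mult_eq_scaleR vec_lambda_eta)

lemma det_cols_matrix_swap:
  assumes "i < CARD('d)" "j < CARD('d)" "i \<noteq> j" "length ds = CARD('d)"
  shows "det (cols_matrix (ds[i := ds ! j, j := ds ! i]) :: real^'d::finite^'d)
           = - det (cols_matrix ds)"
proof -
  obtain x :: 'd where x: "enum_idx x = i" using enum_idx_surj assms by blast
  obtain y :: 'd where y: "enum_idx y = j" using enum_idx_surj assms by blast
  let ?t = "Transposition.transpose x y"
  have "x \<noteq> y" using x y assms by auto
  have perm: "?t permutes UNIV" by (rule permutes_swap_id) auto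
  have "(ds[i := ds ! j, j := ds ! i]) ! enum_idx c = ds ! enum_idx (?t c)" for c
    using x y \<open>x \<noteq> y\<close> assms by (auto simp: nth_list_update transpose_def)
  then have "cols_matrix (ds[i := ds ! j, j := ds ! i]) = (\<chi> r c. cols_matrix ds $ r $ ?t c)"
    unfolding cols_matrix_def by simp
  then show ?thesis
    using det_permute_columns[OF perm, of "cols_matrix ds"] \<open>x \<noteq> y\<close>
    by (simp add: sign_swap_id)
qed

lemma det_cols_matrix_insert:
  assumes "k \<le> length ys" "Suc (length ys) = CARD('d)"
  shows "det (cols_matrix (take k ys @ y # drop k ys) :: real^'d::finite^'d)
           = (-1) ^ k * det (cols_matrix (y # ys))"
  using assms(1)
proof (induction k)
  case 0
  then show ?case by simp
next
  case (Suc k)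
  define A z R where "A = take k ys" and "z = ys ! k" and "R = drop (Suc k) ys"
  have k: "k < length ys" using Suc by auto
  have ys: "ys = A @ z # R" and lenA: "length A = k"
    unfolding A_def z_def R_def using id_take_nth_drop[OF k] k by simp_all
  have before: "take k ys @ y # drop k ys = A @ y # z # R"
    using ys lenA by (metis append_eq_conv_conj drop_Suc_Cons take_Suc_Cons)
  have after: "take (Suc k) ys @ y # drop (Suc k) ys = A @ z # y # R"
    using ys lenA by simp
  have "(A @ y # z # R)[k := (A @ y # z # R) ! Suc k, Suc k := (A @ y # z # R) ! k] = A @ z # y # R"
    using lenA by (simp add: list_update_append nth_append)
  then have "det (cols_matrix (A @ z # y # R) :: real^'d^'d) = - det (cols_matrix (A @ y # z # R))"
    using det_cols_matrix_swap[of k "Suc k" "A @ y # z # R"] k assms(2) lenA ys by auto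
  then show ?case using Suc before after by simp
qed

text \<open>Cramer's rule; moving the right-hand side \<open>c\<close> from column \<open>k\<close> to the front costs the
  sign \<open>(-1)\<^sup>k\<close>.\<close>
lemma cramer_minor:
  fixes cs :: "(real^'d::finite) list"
  assumes len: "length cs = CARD('d)" and sol: "cols_matrix cs *v x = c"
  shows "x $ k * det (cols_matrix cs) = (-1) ^ enum_idx k * minor (c # cs) (Suc (enum_idx k))"
proof -
  define e where "e = enum_idx k"
  define ys where "ys = take e cs @ drop (Suc e) cs"
  have e: "e < CARD('d)" unfolding e_def by simp
  have "cs[e := c] ! enum_idx j = (if j = k then c else cs ! enum_idx j)" for j
    using len unfolding e_def by (auto simp: nth_list_update)
  then have replaced: "(\<chi> i j. if j = k then (cols_matrix cs *v x) $ i else cols_matrix cs $ i $ j)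
                        = cols_matrix (cs[e := c])"
    using sol unfolding cols_matrix_def by (simp add: vec_eq_iff)
  have "cs[e := c] = take e ys @ c # drop e ys"
    unfolding ys_def using len e by (simp add: upd_conv_take_nth_drop min_def)
  then have "x $ k * det (cols_matrix cs) = (-1) ^ e * det (cols_matrix (c # ys))"
    using cramer_lemma[of k "cols_matrix cs" x] replaced det_cols_matrix_insert[of e ys c] len e
    unfolding ys_def by simp
  also have "c # ys = take (Suc e) (c # cs) @ drop (Suc (Suc e)) (c # cs)"
    unfolding ys_def by simp
  finally show ?thesis unfolding minor_eq_det_cols_matrix e_def .
qed

lemma positively_spanning_imp_pos_combination:
  fixes cs :: "(real^'d::finite) list"
  assumes "positively_spanning (c # cs)"
  obtains v where "\<And>k. v $ k > 0" "cols_matrix cs *v v = - c" "det (cols_matrix cs) \<noteq> 0"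
proof -
  let ?A = "cols_matrix cs"
  have len: "length cs = CARD('d)" using assms unfolding positively_spanning_def by simp
  have minor0: "minor (c # cs) 0 = det ?A" unfolding minor_eq_det_cols_matrix by simp
  have sign: "(\<forall>i\<le>CARD('d). (-1) ^ i * minor (c # cs) i > 0) \<or>
              (\<forall>i\<le>CARD('d). (-1) ^ i * minor (c # cs) i < 0)"
    using assms unfolding positively_spanning_def by simp
  then have det: "det ?A \<noteq> 0" using minor0 by force
  then obtain x where x: "?A *v x = c"
    using invertible_det_nz[of ?A] unfolding invertible_def
    by (metis matrix_vector_mul_assoc matrix_vector_mul_lid)
  have "x $ k < 0" for k
  proof -
    \<comment> \<open>\<open>x\<^sub>k det A = - (-1)\<^sup>k\<^sup>+\<^sup>1 minor\<^sub>k\<^sub>+\<^sub>1\<close> has the sign opposite to \<open>det A = minor\<^sub>0\<close>\<close>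
    define e where "e = enum_idx k"
    have e: "Suc e \<le> CARD('d)" unfolding e_def by (simp add: Suc_leI)
    have "x $ k * det ?A = - ((-1) ^ Suc e * minor (c # cs) (Suc e))"
      using cramer_minor[OF len x, of k] unfolding e_def by simp
    then show ?thesis
    proof (cases "det ?A > 0")
      case True
      then have "(-1) ^ Suc e * minor (c # cs) (Suc e) > 0" using sign minor0 e by force
      then have "x $ k * det ?A < 0" using \<open>x $ k * det ?A = _\<close> by linarith
      then show ?thesis using True by (simp add: mult_less_0_iff)
    next
      case False
      then have "(-1) ^ Suc e * minor (c # cs) (Suc e) < 0" using sign minor0 e det by force
      then have "x $ k * det ?A > 0" using \<open>x $ k * det ?A = _\<close> by linarith
      then show ?thesis using False by (simp add: zero_less_mult_iff)
    qed
  qed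
  then show ?thesis
    using that[of "- x"] x det by (simp add: matrix_vector_mult_uminus)
qed

section \<open>Simplices and cells of regular subdivisions\<close>

lemma invertible_if_affine_independent:
  fixes p0 :: "real^'d::finite" and p :: "'d \<Rightarrow> real^'d"
  assumes inj: "inj p" and p0: "p0 \<notin> range p"
    and indep: "\<not> affine_dependent (insert p0 (range p))"
  shows "invertible (\<chi> c. p c - p0)"
  unfolding invertible_right_inverse matrix_right_invertible_independent_rows
proof (intro allI impI)
  fix u :: "'d \<Rightarrow> real" and i :: 'd
  assume "(\<Sum>c\<in>UNIV. u c *s row c (\<chi> c. p c - p0)) = 0"
  moreover have "row c (\<chi> c. p c - p0) = p c - p0" for c
    by (simp add: row_def vec_eq_iff)
  ultimately have comb: "(\<Sum>c\<in>UNIV. u c *\<^sub>R (p c - p0)) = 0"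
    by (simp add: scalar_mult_eq_scaleR)
  define q where "q c = - p0 + p c" for c
  have "inj q" using inj unfolding q_def inj_def by simp
  have "\<not> dependent (range q)"
    using indep affine_dependent_iff_dependent[OF p0] unfolding q_def by (simp add: image_image)
  then have q_indep: "\<forall>w. (\<Sum>v\<in>range q. w v *\<^sub>R v) = 0 \<longrightarrow> (\<forall>v\<in>range q. w v = 0)"
    by (subst (asm) dependent_finite) auto
  have "(\<Sum>v\<in>range q. (u \<circ> inv q) v *\<^sub>R v) = (\<Sum>c\<in>UNIV. u c *\<^sub>R q c)"
    using \<open>inj q\<close> by (simp add: sum.reindex)
  then have "(\<Sum>v\<in>range q. (u \<circ> inv q) v *\<^sub>R v) = 0"
    using comb unfolding q_def by simp
  then have "(u \<circ> inv q) (q i) = 0" using q_indep by blast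
  then show "u i = 0" using \<open>inj q\<close> by simp
qed

lemma in_regular_subdivision_imp_supporting_affine:
  assumes "in_regular_subdivision n a h S"
  obtains w \<mu> where "\<And>j. j < n \<Longrightarrow> j \<in> S \<Longrightarrow> h j + inner w (real_pt (a j)) = \<mu>"
    and "\<And>j. j < n \<Longrightarrow> j \<notin> S \<Longrightarrow> h j + inner w (real_pt (a j)) > \<mu>"
proof -
  let ?P = "lifted_hull n a h"
  obtain F where F: "lower_face ?P F" and S: "S = {j. j < n \<and> (real_pt (a j), h j) \<in> F}"
    using assms unfolding in_regular_subdivision_def by blast
  obtain u u0 where u0: "u0 > 0" and Fne: "F \<noteq> {}"
    and F_eq: "F = {z \<in> ?P. \<forall>y\<in>?P. inner (u, u0) z \<le> inner (u, u0) y}"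
    using F unfolding lower_face_def by blast
  obtain z where z: "z \<in> F" using Fne by blast
  have lifted_in: "(real_pt (a j), h j) \<in> ?P" if "j < n" for j
    unfolding lifted_hull_def using that by (intro hull_inc) auto
  define \<phi> where "\<phi> j = inner (u, u0) (real_pt (a j), h j)" for j
  have min: "inner (u, u0) z \<le> \<phi> j" if "j < n" for j
    using z lifted_in[OF that] unfolding F_eq \<phi>_def by auto
  have memS: "j \<in> S \<longleftrightarrow> \<phi> j = inner (u, u0) z" if "j < n" for j
    using z lifted_in[OF that] min[OF that] that unfolding S F_eq \<phi>_def by force
  show thesis
  proof (rule that[of "(1 / u0) *\<^sub>R u" "inner (u, u0) z / u0"])
    have scaled: "h j + inner ((1 / u0) *\<^sub>R u) (real_pt (a j)) = \<phi> j / u0" for j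
      using u0 unfolding \<phi>_def by (simp add: field_simps inner_commute)
    show "h j + inner ((1 / u0) *\<^sub>R u) (real_pt (a j)) = inner (u, u0) z / u0"
      if "j < n" "j \<in> S" for j
      using memS that unfolding scaled by simp
    show "h j + inner ((1 / u0) *\<^sub>R u) (real_pt (a j)) > inner (u, u0) z / u0"
      if "j < n" "j \<notin> S" for j
    proof -
      have "inner (u, u0) z < \<phi> j" using memS min that by force
      then show ?thesis unfolding scaled using u0 by (simp add: divide_strict_right_mono)
    qed
  qed
qed

lemma sum_lowered_height_pos:
  fixes m :: "nat \<Rightarrow> nat \<Rightarrow> real"
  assumes "L \<ge> 0" "j < n" "r < l"
    and margin: "L * (1 + (\<Sum>r<l. \<Sum>j<n. \<bar>m r j\<bar>)) < (\<Sum>i<n. m r i * h i)"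
  shows "(\<Sum>i<n. m r i * (h(j := h j - L)) i) > 0"
proof -
  have "\<bar>m r j\<bar> \<le> (\<Sum>j<n. \<bar>m r j\<bar>)"
    using assms(2) by (intro member_le_sum) auto
  also have "\<dots> \<le> (\<Sum>r<l. \<Sum>j<n. \<bar>m r j\<bar>)"
    using assms(3) by (intro member_le_sum) (auto intro: sum_nonneg)
  finally have "m r j \<le> 1 + (\<Sum>r<l. \<Sum>j<n. \<bar>m r j\<bar>)" by linarith
  then have "m r j * L \<le> L * (1 + (\<Sum>r<l. \<Sum>j<n. \<bar>m r j\<bar>))"
    using \<open>L \<ge> 0\<close> by (subst mult.commute) (rule mult_left_mono)
  moreover have "(\<Sum>i<n. m r i * (h(j := h j - L)) i) = (\<Sum>i<n. m r i * h i) - m r j * L"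
    using assms(2) by (simp add: sum.remove[of "{..<n}" j] algebra_simps)
  ultimately show ?thesis using margin by linarith
qed

section \<open>Monomials in logarithmic coordinates\<close>

lemma monom_exp: "monom (\<chi> k. exp (z $ k)) a = exp (inner (real_pt a) z)"
proof -
  have "monom (\<chi> k. exp (z $ k)) a = (\<Prod>k\<in>UNIV. exp (of_int (a $ k) * z $ k))"
    unfolding monom_def by (simp add: exp_power_int)
  also have "\<dots> = exp (inner (real_pt a) z)"
    unfolding inner_vec_def real_pt_def by (simp add: exp_sum)
  finally show ?thesis .
qed

lemma open_positive_orthant: "open {x::real^'d::finite. \<forall>k. x $ k > 0}"
proof -
  have "{x::real^'d. \<forall>k. x $ k > 0} = (\<Inter>k. {x. x $ k > 0})" by auto
  then show ?thesis by (simp add: open_INT open_halfspace_component_gt_cart)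
qed

text \<open>On the positive orthant \<open>x\<^sup>a = exp \<langle>a, log x\<rangle>\<close>.\<close>
lemma monom_has_derivative:
  fixes x :: "real^'d::finite"
  assumes x: "\<forall>k. x $ k > 0"
  shows "((\<lambda>y. monom y a) has_derivative
           (\<lambda>dx. monom x a * inner (real_pt a) (\<chi> k. dx $ k / x $ k))) (at x)"
proof -
  define L where "L y = (\<chi> k. ln (y $ k))" for y :: "real^'d"
  have monom_L: "monom y a = exp (inner (real_pt a) (L y))" if "\<forall>k. y $ k > 0" for y
    using monom_exp[of "L y" a] that unfolding L_def by (simp add: vec_eq_iff)
  have "((\<lambda>y. inner (real_pt a) (L y)) has_derivative
               (\<lambda>dx. inner (real_pt a) (\<chi> k. dx $ k / x $ k))) (at x)"
    unfolding L_def inner_vec_def using x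
    by (auto intro!: derivative_eq_intros bounded_linear_imp_has_derivative bounded_linear_vec_nth
        simp: divide_inverse)
  then have "((\<lambda>y. exp (inner (real_pt a) (L y))) has_derivative
               (\<lambda>dx. monom x a * inner (real_pt a) (\<chi> k. dx $ k / x $ k))) (at x)"
    using has_derivative_exp monom_L[OF x] by (fastforce simp: mult.commute)
  then show ?thesis
    by (rule has_derivative_transform_within_open[OF _ open_positive_orthant])
      (use x monom_L in auto)
qed

lemma system_eq_sum: "system n a C \<gamma> x = (\<Sum>j<n. (\<gamma> j * monom x (a j)) *\<^sub>R C j)"
  unfolding system_def by (simp add: vec_eq_iff sum_component mult_ac)

lemma system_has_derivative:
  assumes "\<forall>k. x $ k > 0"
  shows "(system n a C \<gamma> has_derivative
           (\<lambda>dx. \<Sum>j<n. (\<gamma> j * monom x (a j) * inner (real_pt (a j)) (\<chi> k. dx $ k / x $ k)) *\<^sub>R C j))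
         (at x)"
  unfolding system_eq_sum[abs_def] mult.assoc
  by (intro has_derivative_sum has_derivative_scaleR_left has_derivative_mult_right
      monom_has_derivative assms)

lemma abs_ln_add_le:
  fixes v e :: real
  assumes v: "v > 0" and e: "\<bar>e\<bar> \<le> v / 2"
  shows "\<bar>ln (v + e) - ln v\<bar> \<le> 2 * \<bar>e\<bar> / v"
proof -
  define s where "s = e / v"
  have s: "\<bar>s\<bar> \<le> 1/2" unfolding s_def using v e by (simp add: abs_div divide_le_eq)
  have "v + e = v * (1 + s)" unfolding s_def using v by (simp add: field_simps)
  moreover have "1 + s > 0" using s by linarith
  ultimately have "ln (v + e) - ln v = ln (1 + s)" using v by (simp add: ln_mult)
  moreover have "\<bar>ln (1 + s) - s\<bar> \<le> 2 * s\<^sup>2" by (rule abs_ln_one_plus_x_minus_x_bound[OF s])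
  moreover have "2 * s\<^sup>2 \<le> \<bar>s\<bar>"
    using s mult_right_mono[of "2 * \<bar>s\<bar>" 1 "\<bar>s\<bar>"] by (simp add: power2_eq_square abs_mult_self_eq)
  ultimately have "\<bar>ln (v + e) - ln v\<bar> \<le> 2 * \<bar>s\<bar>" by linarith
  then show ?thesis unfolding s_def using v by (simp add: abs_div)
qed

section \<open>A positively decorated simplex\<close>

locale decorated_simplex =
  fixes n :: nat and a :: "nat \<Rightarrow> int^'d::finite" and C :: "nat \<Rightarrow> real^'d" and D :: "nat set"
  assumes inj_a: "inj_on a {..<n}"
    and simplex: "is_simplex n a D"
    and decorated: "positively_decorated C D"
begin

abbreviation pt :: "nat \<Rightarrow> real^'d" where "pt j \<equiv> real_pt (a j)"

text \<open>The vertices of \<open>D\<close> in increasing order are \<open>j0\<close> followed by the \<open>jc c\<close>, the coordinates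
  \<open>c\<close> being enumerated by \<^const>\<open>enum_idx\<close>.\<close>
definition js :: "nat list" where "js = sorted_list_of_set D"
definition j0 :: nat where "j0 = js ! 0"
definition jc :: "'d \<Rightarrow> nat" where "jc c = js ! Suc (enum_idx c)"
definition dec_matrix :: "real^'d^'d" where "dec_matrix = cols_matrix (map C (tl js))"
definition edge_matrix :: "real^'d^'d" where "edge_matrix = (\<chi> c. pt (jc c) - pt j0)"

lemma D_subset: "D \<subseteq> {..<n}"
  and card_D: "card D = CARD('d) + 1"
  and D_affine_independent: "\<not> affine_dependent (pt ` D)"
  using simplex unfolding is_simplex_def by (auto simp: image_image)

lemma finite_D: "finite D"
  using D_subset finite_subset by blast

lemma js: "length js = CARD('d) + 1" "distinct js" "set js = D"
  using finite_D card_D unfolding js_def by auto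

lemma js_Cons: "js = j0 # tl js"
  using js(1) unfolding j0_def by (cases js) auto

lemma jc_in: "jc c \<in> D" and j0_in: "j0 \<in> D"
  using js unfolding jc_def j0_def by (auto intro!: nth_mem)

lemma jc_eq_iff: "jc c = jc c' \<longleftrightarrow> c = c'"
  using js unfolding jc_def by (simp add: nth_eq_iff_index_eq)

lemma j0_notin_range_jc: "j0 \<notin> range jc"
  using js unfolding jc_def j0_def by (auto simp: nth_eq_iff_index_eq)

lemma D_eq: "D = insert j0 (range jc)"
proof
  show "insert j0 (range jc) \<subseteq> D" using jc_in j0_in by auto
  show "D \<subseteq> insert j0 (range jc)"
  proof
    fix i assume "i \<in> D"
    then obtain k where k: "k < CARD('d) + 1" "i = js ! k" using js by (metis in_set_conv_nth)
    show "i \<in> insert j0 (range jc)"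
    proof (cases k)
      case 0
      then show ?thesis using k js unfolding j0_def by simp
    next
      case (Suc k')
      then obtain c :: 'd where "enum_idx c = k'" using enum_idx_surj k by auto
      then show ?thesis using k Suc unfolding jc_def by auto
    qed
  qed
qed

lemma sum_D: "(\<Sum>j\<in>D. f j) = f j0 + (\<Sum>c\<in>UNIV. f (jc c))"
proof -
  have "inj jc" using jc_eq_iff by (auto intro: injI)
  then show ?thesis using j0_notin_range_jc by (subst D_eq) (simp add: sum.reindex)
qed

lemma sum_split_D: "(\<Sum>j<n. f j) = f j0 + (\<Sum>c\<in>UNIV. f (jc c)) + (\<Sum>j\<in>{..<n} - D. f j)"
proof -
  have "{..<n} = D \<union> ({..<n} - D)" using D_subset by auto
  then have "(\<Sum>j<n. f j) = (\<Sum>j\<in>D. f j) + (\<Sum>j\<in>{..<n} - D. f j)"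
    using finite_D by (metis Diff_disjoint finite_Diff finite_lessThan sum.union_disjoint)
  then show ?thesis unfolding sum_D .
qed

lemma dec_matrix_mult: "dec_matrix *v y = (\<Sum>c\<in>UNIV. y $ c *\<^sub>R C (jc c))"
proof -
  have "map C (tl js) ! enum_idx c = C (jc c)" for c
    using js(1) unfolding jc_def by (simp add: nth_tl)
  then show ?thesis unfolding dec_matrix_def cols_matrix_mult by simp
qed

lemma edge_matrix_mult: "(edge_matrix *v z) $ c = inner (pt (jc c) - pt j0) z"
  unfolding edge_matrix_def matrix_vector_mult_def inner_vec_def by simp

lemma positively_spanning_columns: "positively_spanning (C j0 # map C (tl js))"
  using decorated js_Cons unfolding positively_decorated_def js_def by (metis list.simps(9))

lemma decoration_vector: "\<exists>v. (\<forall>c. v $ c > 0) \<and> dec_matrix *v v = - C j0"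
  using positively_spanning_imp_pos_combination[OF positively_spanning_columns]
  unfolding dec_matrix_def by metis

lemma dec_matrix_invertible: "invertible dec_matrix"
  using positively_spanning_imp_pos_combination[OF positively_spanning_columns]
  unfolding dec_matrix_def invertible_det_nz by metis

lemma edge_matrix_invertible: "invertible edge_matrix"
proof -
  have inj_pt: "inj_on pt D"
    using inj_a D_subset unfolding inj_on_def real_pt_def by (auto simp: vec_eq_iff subset_iff)
  have "inj (pt \<circ> jc)"
    using inj_on_eq_iff[OF inj_pt] jc_in jc_eq_iff by (auto intro: injI)
  moreover have "pt j0 \<notin> range (pt \<circ> jc)"
    using inj_on_eq_iff[OF inj_pt] jc_in j0_in j0_notin_range_jc by auto
  moreover have "\<not> affine_dependent (insert (pt j0) (range (pt \<circ> jc)))"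
    using D_affine_independent by (subst (asm) D_eq) (simp add: image_image)
  ultimately show ?thesis
    unfolding edge_matrix_def using invertible_if_affine_independent[of "pt \<circ> jc" "pt j0"] by simp
qed

definition dec_vec :: "real^'d" where
  "dec_vec = (SOME v. (\<forall>c. v $ c > 0) \<and> dec_matrix *v v = - C j0)"

lemma dec_vec_pos: "dec_vec $ c > 0" and dec_matrix_dec_vec: "dec_matrix *v dec_vec = - C j0"
  using someI_ex[OF decoration_vector] unfolding dec_vec_def by auto

text \<open>\<open>z0\<close> solves the truncated system \<open>\<Sum>\<^sub>j\<^sub>\<in>\<^sub>D exp \<langle>pt j, z\<rangle> C j = 0\<close>. On \<open>cball z0 1\<close>, which lies
  in \<open>cball 0 R0\<close>, the simplex terms are at least \<open>cell_lb\<close>; \<open>off_ub\<close> is the size up to which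
  the other terms do not spoil the fixed point argument and the Jacobian estimate, and a height
  gap of \<open>gap_bound\<close> keeps them that small.\<close>
definition z0 :: "real^'d" where "z0 = matrix_inv edge_matrix *v (\<chi> c. ln (dec_vec $ c))"
definition R0 :: real where "R0 = norm z0 + 1"
definition pt_bnd :: real where "pt_bnd = 1 + (\<Sum>j<n. norm (pt j))"
definition C_bnd :: real where "C_bnd = 1 + (\<Sum>j<n. norm (C j))"
definition dec_inv_bnd :: real where "dec_inv_bnd = 1 + onorm ((*v) (matrix_inv dec_matrix))"
definition edge_inv_bnd :: real where "edge_inv_bnd = 1 + onorm ((*v) (matrix_inv edge_matrix))"
definition vmin :: real where "vmin = Min (range (($) dec_vec))"
definition cell_lb :: real where "cell_lb = exp (- (pt_bnd * R0))"
definition correction_factor :: real where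
  "correction_factor = exp (pt_bnd * R0) * dec_inv_bnd * C_bnd"
definition off_ub :: real where
  "off_ub = min (vmin / (2 * real CARD('d) * edge_inv_bnd * correction_factor))
                (cell_lb / (4 * real CARD('d) * edge_inv_bnd * dec_inv_bnd * pt_bnd * C_bnd))"
definition gap_bound :: real where "gap_bound = pt_bnd * R0 - ln off_ub"

lemma pt_bnd_ge: "pt_bnd \<ge> 1" and C_bnd_ge: "C_bnd \<ge> 1"
  and dec_inv_bnd_ge: "dec_inv_bnd \<ge> 1" and edge_inv_bnd_ge: "edge_inv_bnd \<ge> 1"
  unfolding pt_bnd_def C_bnd_def dec_inv_bnd_def edge_inv_bnd_def
  by (simp_all add: sum_nonneg onorm_pos_le matrix_vector_mul_bounded_linear)

lemma vmin_pos: "vmin > 0" and vmin_le: "vmin \<le> dec_vec $ c"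
  unfolding vmin_def using dec_vec_pos by (auto simp: Min_gr_iff)

lemma cell_lb_pos: "cell_lb > 0" and correction_factor_pos: "correction_factor > 0"
  unfolding cell_lb_def correction_factor_def using dec_inv_bnd_ge C_bnd_ge by auto

lemma off_ub_pos: "off_ub > 0"
  unfolding off_ub_def
  using vmin_pos cell_lb_pos correction_factor_pos edge_inv_bnd_ge dec_inv_bnd_ge pt_bnd_ge C_bnd_ge
  by simp

lemma off_ub_correction: "off_ub * (2 * real CARD('d) * edge_inv_bnd * correction_factor) \<le> vmin"
proof -
  have "off_ub \<le> vmin / (2 * real CARD('d) * edge_inv_bnd * correction_factor)"
    unfolding off_ub_def by linarith
  then show ?thesis using correction_factor_pos edge_inv_bnd_ge by (simp add: pos_le_divide_eq)
qed

lemma off_ub_lin: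
  "off_ub * (4 * real CARD('d) * edge_inv_bnd * dec_inv_bnd * pt_bnd * C_bnd) \<le> cell_lb"
proof -
  have "off_ub \<le> cell_lb / (4 * real CARD('d) * edge_inv_bnd * dec_inv_bnd * pt_bnd * C_bnd)"
    unfolding off_ub_def by linarith
  then show ?thesis
    using edge_inv_bnd_ge dec_inv_bnd_ge pt_bnd_ge C_bnd_ge by (simp add: pos_le_divide_eq)
qed

lemma off_ub_less: "off_ub < cell_lb"
proof -
  have "1 \<le> real CARD('d) * edge_inv_bnd * dec_inv_bnd * pt_bnd * C_bnd"
    using edge_inv_bnd_ge dec_inv_bnd_ge pt_bnd_ge C_bnd_ge by (intro mult_ge1_I) auto
  then have "off_ub * 1
               < off_ub * (4 * real CARD('d) * edge_inv_bnd * dec_inv_bnd * pt_bnd * C_bnd)"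
    using off_ub_pos by (intro mult_strict_left_mono) auto
  then show ?thesis using off_ub_lin by simp
qed

lemma norm_pt_le: "j < n \<Longrightarrow> norm (pt j) \<le> pt_bnd"
  using member_le_sum[of j "{..<n}" "\<lambda>j. norm (pt j)"] unfolding pt_bnd_def by simp

lemma inner_pt_le:
  assumes "j < n" "norm z \<le> R0"
  shows "\<bar>inner (pt j) z\<bar> \<le> pt_bnd * R0"
  using assms norm_pt_le pt_bnd_ge by (intro order_trans[OF Cauchy_Schwarz_ineq2] mult_mono) auto

lemma sum_norm_C_le: "(\<Sum>j\<in>{..<n} - D. norm (C j)) \<le> C_bnd"
  using sum_mono2[of "{..<n}" "{..<n} - D" "\<lambda>j. norm (C j)"] unfolding C_bnd_def by simp

lemma norm_dec_matrix_inv_le: "norm (matrix_inv dec_matrix *v y) \<le> dec_inv_bnd * norm y"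
  by (rule order_trans[OF matrix_vector_mult_norm_le mult_right_mono])
    (simp_all add: dec_inv_bnd_def)

lemma norm_edge_matrix_inv_le: "norm (matrix_inv edge_matrix *v y) \<le> edge_inv_bnd * norm y"
  by (rule order_trans[OF matrix_vector_mult_norm_le mult_right_mono])
    (simp_all add: edge_inv_bnd_def)

lemma norm_le_edge_matrix: "norm x \<le> edge_inv_bnd * norm (edge_matrix *v x)"
  using norm_edge_matrix_inv_le[of "edge_matrix *v x"]
  unfolding matrix_inv_mult_cancel(1)[OF edge_matrix_invertible] .

end

section \<open>A zero of the perturbed system\<close>

text \<open>\<open>\<eta> j\<close> is the height of the lifted point \<open>j\<close> above the affine function supporting the cell
  \<open>D\<close>. In the coordinates \<open>z = log x + w\<close> the system, multiplied by \<open>exp \<mu>\<close>, becomes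
  \<open>log_system\<close>.\<close>
locale weighted_simplex = decorated_simplex n a C D
  for n a and C :: "nat \<Rightarrow> real^'d::finite" and D +
  fixes \<eta> :: "nat \<Rightarrow> real"
  assumes \<eta>_cell: "j \<in> D \<Longrightarrow> \<eta> j = 0"
    and \<eta>_gap: "j < n \<Longrightarrow> j \<notin> D \<Longrightarrow> gap_bound \<le> \<eta> j"
begin

definition log_term :: "nat \<Rightarrow> real^'d \<Rightarrow> real" where "log_term j z = exp (inner (pt j) z - \<eta> j)"
definition log_system :: "real^'d \<Rightarrow> real^'d" where "log_system z = (\<Sum>j<n. log_term j z *\<^sub>R C j)"
definition off_part :: "real^'d \<Rightarrow> real^'d" where
  "off_part z = (\<Sum>j\<in>{..<n} - D. log_term j z *\<^sub>R C j)"
definition correction :: "real^'d \<Rightarrow> real^'d" where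
  "correction z = - exp (- inner (pt j0) z) *\<^sub>R (matrix_inv dec_matrix *v off_part z)"

text \<open>Zeros of \<open>log_system\<close> near \<open>z0\<close> are the fixed points of \<open>\<Phi>\<close>: solving the \<open>d\<close> equations
  for the simplex terms, with the off-simplex terms moved to the right-hand side.\<close>
definition \<Phi> :: "real^'d \<Rightarrow> real^'d" where
  "\<Phi> z = matrix_inv edge_matrix *v (\<chi> c. ln (dec_vec $ c + correction z $ c))"

lemma log_term_pos: "log_term j z > 0"
  unfolding log_term_def by simp

lemma log_term_cell: "j \<in> D \<Longrightarrow> log_term j z = exp (inner (pt j) z)"
  unfolding log_term_def using \<eta>_cell by simp

lemma log_term_cell_ge:
  assumes "j \<in> D" "norm z \<le> R0"
  shows "cell_lb \<le> log_term j z"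
  using inner_pt_le[of j z] assms D_subset unfolding log_term_cell[OF assms(1)] cell_lb_def by auto

lemma log_term_off_le:
  assumes "j < n" "j \<notin> D" "norm z \<le> R0"
  shows "log_term j z \<le> off_ub"
proof -
  have "inner (pt j) z - \<eta> j \<le> ln off_ub"
    using inner_pt_le[OF assms(1,3)] \<eta>_gap[OF assms(1,2)] unfolding gap_bound_def by linarith
  then show ?thesis unfolding log_term_def using off_ub_pos by (metis exp_le_cancel_iff exp_ln)
qed

lemma off_sum_norm_le:
  assumes z: "norm z \<le> R0" and "S \<ge> 0" and s: "\<And>j. j \<in> {..<n} - D \<Longrightarrow> \<bar>s j\<bar> \<le> S"
  shows "norm (\<Sum>j\<in>{..<n} - D. (log_term j z * s j) *\<^sub>R C j) \<le> off_ub * S * C_bnd"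
proof -
  have "norm (\<Sum>j\<in>{..<n} - D. (log_term j z * s j) *\<^sub>R C j)
          \<le> (\<Sum>j\<in>{..<n} - D. \<bar>log_term j z * s j\<bar> * norm (C j))"
    by (rule order_trans[OF norm_sum]) simp
  also have "\<dots> \<le> (\<Sum>j\<in>{..<n} - D. (off_ub * S) * norm (C j))"
  proof (intro sum_mono mult_right_mono)
    fix j assume "j \<in> {..<n} - D"
    then show "\<bar>log_term j z * s j\<bar> \<le> off_ub * S"
      unfolding abs_mult using log_term_off_le[of j z] log_term_pos[of j z] s z
      by (intro mult_mono) auto
  qed simp
  also have "\<dots> \<le> off_ub * S * C_bnd"
    unfolding sum_distrib_left[symmetric]
    using sum_norm_C_le off_ub_pos \<open>S \<ge> 0\<close> by (intro mult_left_mono) auto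
  finally show ?thesis .
qed

lemma correction_component_le:
  assumes "norm z \<le> R0"
  shows "\<bar>correction z $ c\<bar> \<le> off_ub * correction_factor"
proof -
  have "exp (- inner (pt j0) z) \<le> exp (pt_bnd * R0)"
    using inner_pt_le[OF _ assms, of j0] j0_in D_subset by auto
  moreover have "norm (off_part z) \<le> off_ub * 1 * C_bnd"
    using off_sum_norm_le[OF assms, of 1 "\<lambda>_. 1"] unfolding off_part_def by simp
  then have "norm (matrix_inv dec_matrix *v off_part z) \<le> dec_inv_bnd * (off_ub * C_bnd)"
    using dec_inv_bnd_ge by (intro order_trans[OF norm_dec_matrix_inv_le] mult_left_mono) auto
  ultimately have "exp (- inner (pt j0) z) * norm (matrix_inv dec_matrix *v off_part z)
                    \<le> exp (pt_bnd * R0) * (dec_inv_bnd * (off_ub * C_bnd))"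
    by (rule mult_mono) auto
  then have "norm (correction z) \<le> off_ub * correction_factor"
    unfolding correction_def correction_factor_def by (simp add: mult_ac)
  then show ?thesis
    using component_le_norm_cart[of "correction z" c] by linarith
qed

lemma correction_component_small:
  assumes "norm z \<le> R0"
  shows "\<bar>correction z $ c\<bar> \<le> vmin / (2 * real CARD('d) * edge_inv_bnd)"
proof -
  have "off_ub * correction_factor \<le> vmin / (2 * real CARD('d) * edge_inv_bnd)"
    using off_ub_correction edge_inv_bnd_ge by (simp add: pos_le_divide_eq mult_ac)
  then show ?thesis using correction_component_le[OF assms, of c] by linarith
qed

lemma correction_component_half:
  assumes "norm z \<le> R0"
  shows "\<bar>correction z $ c\<bar> \<le> dec_vec $ c / 2"
proof -
  have "1 \<le> real CARD('d) * edge_inv_bnd" using edge_inv_bnd_ge by (intro mult_ge1_I) auto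
  then have "vmin / (2 * real CARD('d) * edge_inv_bnd) \<le> vmin / 2"
    using vmin_pos by (intro divide_left_mono) (auto simp: mult.assoc)
  then show ?thesis using correction_component_small[OF assms, of c] vmin_le[of c] by linarith
qed

lemma norm_le_R0: "z \<in> cball z0 1 \<Longrightarrow> norm z \<le> R0"
  using norm_triangle_ineq2[of z z0] unfolding R0_def by (simp add: dist_norm norm_minus_commute)

lemma \<Phi>_maps_cball: "z \<in> cball z0 1 \<Longrightarrow> \<Phi> z \<in> cball z0 1"
proof -
  assume "z \<in> cball z0 1"
  then have z: "norm z \<le> R0" by (rule norm_le_R0)
  define \<delta> where "\<delta> = (\<chi> c. ln (dec_vec $ c + correction z $ c) - ln (dec_vec $ c))"
  have \<delta>: "\<bar>\<delta> $ c\<bar> \<le> 1 / (real CARD('d) * edge_inv_bnd)" for c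
  proof -
    have "\<bar>\<delta> $ c\<bar> \<le> 2 * \<bar>correction z $ c\<bar> / dec_vec $ c"
      unfolding \<delta>_def by (simp add: abs_ln_add_le[OF dec_vec_pos correction_component_half[OF z]])
    also have "\<dots> \<le> 2 * (vmin / (2 * real CARD('d) * edge_inv_bnd)) / vmin"
      using correction_component_small[OF z, of c] vmin_pos vmin_le[of c] edge_inv_bnd_ge
      by (intro frac_le mult_left_mono) auto
    also have "\<dots> = 1 / (real CARD('d) * edge_inv_bnd)" using vmin_pos by simp
    finally show ?thesis .
  qed
  have "(\<chi> c. ln (dec_vec $ c + correction z $ c)) - (\<chi> c. ln (dec_vec $ c)) = \<delta>"
    unfolding \<delta>_def by (simp add: vec_eq_iff)
  then have "\<Phi> z - z0 = matrix_inv edge_matrix *v \<delta>"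
    unfolding \<Phi>_def z0_def by (metis matrix_vector_mult_diff_distrib)
  then have "norm (\<Phi> z - z0) \<le> edge_inv_bnd * norm \<delta>"
    using norm_edge_matrix_inv_le[of \<delta>] by simp
  also have "\<dots> \<le> edge_inv_bnd * (\<Sum>c\<in>UNIV. \<bar>\<delta> $ c\<bar>)"
    using norm_le_l1_cart[of \<delta>] edge_inv_bnd_ge by (intro mult_left_mono) auto
  also have "\<dots> \<le> edge_inv_bnd * (\<Sum>c\<in>(UNIV::'d set). 1 / (real CARD('d) * edge_inv_bnd))"
    using edge_inv_bnd_ge \<delta> by (intro mult_left_mono sum_mono) auto
  also have "\<dots> = 1" using edge_inv_bnd_ge by simp
  finally show "\<Phi> z \<in> cball z0 1" by (simp add: dist_norm norm_minus_commute)
qed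

lemma \<Phi>_continuous: "continuous_on (cball z0 1) \<Phi>"
proof -
  have "continuous_on (cball z0 1) correction"
    unfolding correction_def off_part_def log_term_def by (intro continuous_intros)
  moreover have "dec_vec $ c + correction z $ c \<noteq> 0" if "z \<in> cball z0 1" for z c
    using correction_component_half[OF norm_le_R0[OF that], of c] dec_vec_pos[of c] by linarith
  ultimately show ?thesis
    unfolding \<Phi>_def by (intro continuous_intros) auto
qed

lemma log_system_split:
  "log_system z = log_term j0 z *\<^sub>R C j0 + dec_matrix *v (\<chi> c. log_term (jc c) z) + off_part z"
  unfolding log_system_def off_part_def dec_matrix_mult by (simp add: sum_split_D)

lemma fixed_point_imp_zero:
  assumes fixed: "\<Phi> z = z" and z: "norm z \<le> R0"
  shows "log_system z = 0"
proof -
  define \<iota> where "\<iota> = inner (pt j0) z"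
  have "log_term (jc c) z = exp \<iota> * (dec_vec $ c + correction z $ c)" for c
  proof -
    have pos: "dec_vec $ c + correction z $ c > 0"
      using correction_component_half[OF z, of c] dec_vec_pos[of c] by linarith
    have "edge_matrix *v z = (\<chi> c. ln (dec_vec $ c + correction z $ c))"
      using fixed matrix_inv_mult_cancel(2)[OF edge_matrix_invertible] unfolding \<Phi>_def by metis
    then have "inner (pt (jc c)) z = \<iota> + ln (dec_vec $ c + correction z $ c)"
      using edge_matrix_mult[of z c] unfolding \<iota>_def by (simp add: inner_diff_left)
    then show ?thesis using pos unfolding log_term_cell[OF jc_in] by (simp add: exp_add)
  qed
  then have "(\<chi> c. log_term (jc c) z) = exp \<iota> *\<^sub>R (dec_vec + correction z)"
    by (simp add: vec_eq_iff)
  then have "dec_matrix *v (\<chi> c. log_term (jc c) z)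
               = exp \<iota> *\<^sub>R (dec_matrix *v dec_vec + dec_matrix *v correction z)"
    by (simp add: matrix_vector_mult_scaleR matrix_vector_right_distrib)
  also have "dec_matrix *v correction z = - exp (- \<iota>) *\<^sub>R off_part z"
    unfolding correction_def \<iota>_def
    by (simp only: matrix_vector_mult_scaleR matrix_inv_mult_cancel(2)[OF dec_matrix_invertible])
  also have "exp \<iota> *\<^sub>R (dec_matrix *v dec_vec + - exp (- \<iota>) *\<^sub>R off_part z)
               = - exp \<iota> *\<^sub>R C j0 - off_part z"
    unfolding dec_matrix_dec_vec by (simp add: scaleR_add_right scaleR_diff_right exp_minus_inverse)
  finally show ?thesis
    unfolding log_system_split log_term_cell[OF j0_in] \<iota>_def by simp
qed

lemma log_system_has_zero: obtains z where "norm z \<le> R0" "log_system z = 0"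
proof -
  obtain z where "z \<in> cball z0 1" "\<Phi> z = z"
    using brouwer[of "cball z0 1" \<Phi>] \<Phi>_maps_cball \<Phi>_continuous by auto
  then show thesis using that norm_le_R0 fixed_point_imp_zero by blast
qed

lemma cell_terms_dominate:
  assumes "norm z \<le> R0" "i \<in> D" "j < n" "j \<notin> D"
  shows "log_term j z < log_term i z"
  using log_term_off_le[OF assms(3,4,1)] off_ub_less log_term_cell_ge[OF assms(2,1)] by linarith

lemma off_linear_norm_le:
  assumes "norm z \<le> R0"
  shows "norm (\<Sum>j\<in>{..<n} - D. (log_term j z * inner (pt j - pt j0) W) *\<^sub>R C j)
           \<le> off_ub * (2 * pt_bnd * norm W) * C_bnd"
proof (rule off_sum_norm_le[OF assms])
  fix j assume j: "j \<in> {..<n} - D"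
  have "norm (pt j - pt j0) \<le> 2 * pt_bnd"
    using norm_triangle_ineq4[of "pt j" "pt j0"] norm_pt_le[of j] norm_pt_le[of j0] j j0_in D_subset
    by auto
  then show "\<bar>inner (pt j - pt j0) W\<bar> \<le> 2 * pt_bnd * norm W"
    by (intro order_trans[OF Cauchy_Schwarz_ineq2] mult_right_mono) auto
qed (use pt_bnd_ge in simp)

text \<open>Subtracting \<open>\<langle>pt j0, W\<rangle>\<close> times the equation \<open>log_system z = 0\<close> removes the \<open>j0\<close> term
  from the linearization.\<close>
lemma log_linearization_reduced:
  assumes "log_system z = 0" and "(\<Sum>j<n. (log_term j z * inner (pt j) W) *\<^sub>R C j) = 0"
  shows "dec_matrix *v (\<chi> c. log_term (jc c) z * (edge_matrix *v W) $ c)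
           = - (\<Sum>j\<in>{..<n} - D. (log_term j z * inner (pt j - pt j0) W) *\<^sub>R C j)"
proof -
  have "(\<Sum>j<n. (log_term j z * inner (pt j - pt j0) W) *\<^sub>R C j)
          = (\<Sum>j<n. (log_term j z * inner (pt j) W) *\<^sub>R C j) - inner (pt j0) W *\<^sub>R log_system z"
    unfolding log_system_def scaleR_sum_right sum_subtractf[symmetric]
    by (rule sum.cong) (auto simp: inner_diff_left algebra_simps)
  also have "\<dots> = 0" using assms by simp
  moreover have "(\<Sum>j<n. (log_term j z * inner (pt j - pt j0) W) *\<^sub>R C j)
      = dec_matrix *v (\<chi> c. log_term (jc c) z * (edge_matrix *v W) $ c)
        + (\<Sum>j\<in>{..<n} - D. (log_term j z * inner (pt j - pt j0) W) *\<^sub>R C j)"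
    unfolding sum_split_D dec_matrix_mult by (simp add: edge_matrix_mult)
  ultimately show ?thesis by (simp add: eq_neg_iff_add_eq_0)
qed

lemma log_linearization_injective:
  assumes z: "norm z \<le> R0" and zero: "log_system z = 0"
    and lin: "(\<Sum>j<n. (log_term j z * inner (pt j) W) *\<^sub>R C j) = 0"
  shows "W = 0"
proof -
  define Y where "Y = (\<chi> c. log_term (jc c) z * (edge_matrix *v W) $ c)"
  define P where "P = (\<Sum>j\<in>{..<n} - D. (log_term j z * inner (pt j - pt j0) W) *\<^sub>R C j)"
  have Y: "Y = - (matrix_inv dec_matrix *v P)"
    using log_linearization_reduced[OF zero lin]
      matrix_inv_mult_cancel(1)[OF dec_matrix_invertible, of Y]
    unfolding Y_def P_def by (simp add: matrix_vector_mult_uminus)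
  have edge_le: "cell_lb * \<bar>(edge_matrix *v W) $ c\<bar>
                   \<le> dec_inv_bnd * (off_ub * (2 * pt_bnd * norm W) * C_bnd)" for c
  proof -
    have "cell_lb * \<bar>(edge_matrix *v W) $ c\<bar> \<le> \<bar>Y $ c\<bar>"
      unfolding Y_def using log_term_cell_ge[OF jc_in z, of c] log_term_pos[of "jc c" z]
      by (auto simp: abs_mult intro: mult_right_mono)
    also have "\<dots> \<le> dec_inv_bnd * norm P"
      using component_le_norm_cart[of Y c] norm_dec_matrix_inv_le[of P] unfolding Y by simp
    also have "\<dots> \<le> dec_inv_bnd * (off_ub * (2 * pt_bnd * norm W) * C_bnd)"
      using dec_inv_bnd_ge off_linear_norm_le[OF z, of W] unfolding P_def
      by (intro mult_left_mono) auto
    finally show ?thesis .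
  qed
  have "cell_lb * norm W \<le> edge_inv_bnd * (\<Sum>c\<in>UNIV. cell_lb * \<bar>(edge_matrix *v W) $ c\<bar>)"
    using norm_le_edge_matrix[of W] norm_le_l1_cart[of "edge_matrix *v W"]
      cell_lb_pos edge_inv_bnd_ge
    by (simp add: sum_distrib_left[symmetric] mult.left_commute order_trans)
  also have "\<dots> \<le> edge_inv_bnd *
      (\<Sum>c\<in>(UNIV::'d set). dec_inv_bnd * (off_ub * (2 * pt_bnd * norm W) * C_bnd))"
    using edge_inv_bnd_ge edge_le by (intro mult_left_mono sum_mono) auto
  also have "\<dots> = off_ub * (4 * real CARD('d) * edge_inv_bnd * dec_inv_bnd * pt_bnd * C_bnd)
                       * norm W / 2"
    by (simp add: mult_ac)
  also have "\<dots> \<le> cell_lb * norm W / 2"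
    using off_ub_lin by (intro divide_right_mono mult_right_mono) auto
  finally have "cell_lb * norm W \<le> 0" by linarith
  then show "W = 0" using cell_lb_pos by (simp add: mult_le_0_iff)
qed

lemma nondegenerate_solution_of_log_zero:
  assumes z: "norm z \<le> R0" "log_system z = 0" and x_pos: "\<forall>k. x $ k > 0" and "\<kappa> \<noteq> 0"
    and terms: "\<And>j. j < n \<Longrightarrow> \<gamma> j * monom x (a j) = \<kappa> * log_term j z"
  shows "nondegenerate_positive_solution n a C \<gamma> x"
proof -
  have "system n a C \<gamma> x = \<kappa> *\<^sub>R log_system z"
    unfolding system_eq_sum log_system_def scaleR_sum_right
    by (rule sum.cong) (simp_all add: terms)
  then have zero: "system n a C \<gamma> x = 0" using z by simp
  define f' where
    "f' dx = (\<Sum>j<n. (\<gamma> j * monom x (a j) * inner (pt j) (\<chi> k. dx $ k / x $ k)) *\<^sub>R C j)" for dx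
  have der: "(system n a C \<gamma> has_derivative f') (at x)"
    unfolding f'_def[abs_def] by (rule system_has_derivative[OF x_pos])
  have "dx = 0" if "f' dx = 0" for dx
  proof -
    have "f' dx = \<kappa> *\<^sub>R (\<Sum>j<n. (log_term j z * inner (pt j) (\<chi> k. dx $ k / x $ k)) *\<^sub>R C j)"
      unfolding f'_def scaleR_sum_right by (rule sum.cong) (simp_all add: terms)
    then have "(\<chi> k. dx $ k / x $ k) = 0"
      using log_linearization_injective[OF z] that \<open>\<kappa> \<noteq> 0\<close> by simp
    then show "dx = 0" using x_pos by (simp add: vec_eq_iff) (metis less_irrefl)
  qed
  then have "det (matrix f') \<noteq> 0"
    using has_derivative_linear[OF der] by (simp add: det_nz_iff_inj linear_inj_iff_eq_0)
  then show ?thesis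
    unfolding nondegenerate_positive_solution_def using x_pos zero der by blast
qed

end

section \<open>Solutions from the cone of heights\<close>

context decorated_simplex
begin

lemma affine_on_simplex_unique:
  assumes "\<And>i. i \<in> D \<Longrightarrow> h i + inner w (pt i) = \<mu>"
    and "\<And>i. i \<in> D \<Longrightarrow> h i + inner w' (pt i) = \<mu>'"
  shows "w = w'" and "\<mu> = \<mu>'"
proof -
  have "(edge_matrix *v (w - w')) $ c = 0" for c
  proof -
    have "h (jc c) + inner (pt (jc c)) w = \<mu>" "h j0 + inner (pt j0) w = \<mu>"
      "h (jc c) + inner (pt (jc c)) w' = \<mu>'" "h j0 + inner (pt j0) w' = \<mu>'"
      using assms jc_in j0_in by (auto simp: inner_commute)
    then show ?thesis unfolding edge_matrix_mult inner_diff_right inner_diff_left by linarith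
  qed
  then have "edge_matrix *v (w - w') = edge_matrix *v 0" by (simp add: vec_eq_iff)
  then show "w = w'"
    using injD[OF inj_matrix_vector_mult[OF edge_matrix_invertible]] by fastforce
  then show "\<mu> = \<mu>'" using assms[OF j0_in] by simp
qed

text \<open>Lowering the height of a single point off \<open>D\<close> by \<open>L\<close> keeps \<open>D\<close> a cell, and the
  affine function supporting \<open>D\<close> does not change; hence every point off \<open>D\<close> lies at
  least \<open>L\<close> above it.\<close>
lemma cell_gap_from_cone:
  fixes m :: "nat \<Rightarrow> nat \<Rightarrow> real"
  assumes cone: "\<And>h'. (\<forall>r<l. (\<Sum>j<n. m r j * h' j) > 0) \<Longrightarrow> in_regular_subdivision n a h' D"
    and margin: "\<And>r. r < l \<Longrightarrow> L * (1 + (\<Sum>r<l. \<Sum>j<n. \<bar>m r j\<bar>)) < (\<Sum>j<n. m r j * h j)"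
    and "L \<ge> 0"
  obtains w \<mu> where "\<And>j. j \<in> D \<Longrightarrow> h j + inner w (pt j) = \<mu>"
    and "\<And>j. j < n \<Longrightarrow> j \<notin> D \<Longrightarrow> \<mu> + L \<le> h j + inner w (pt j)"
proof -
  have "0 \<le> L * (1 + (\<Sum>r<l. \<Sum>j<n. \<bar>m r j\<bar>))"
    using \<open>L \<ge> 0\<close> by (simp add: sum_nonneg add_nonneg_nonneg)
  then have "in_regular_subdivision n a h D"
    using margin by (intro cone allI impI) (smt (verit))
  then obtain w \<mu> where "\<And>j. j < n \<Longrightarrow> j \<in> D \<Longrightarrow> h j + inner w (pt j) = \<mu>"
    by (rule in_regular_subdivision_imp_supporting_affine) blast
  then have on_D: "\<And>j. j \<in> D \<Longrightarrow> h j + inner w (pt j) = \<mu>"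
    using D_subset by blast
  moreover have "\<mu> + L \<le> h j + inner w (pt j)" if j: "j < n" "j \<notin> D" for j
  proof -
    let ?h' = "h(j := h j - L)"
    have "in_regular_subdivision n a ?h' D"
      by (intro cone allI impI sum_lowered_height_pos[OF \<open>L \<ge> 0\<close> j(1)]) (auto intro: margin)
    then obtain w' \<mu>' where on_D': "\<And>i. i < n \<Longrightarrow> i \<in> D \<Longrightarrow> ?h' i + inner w' (pt i) = \<mu>'"
      and off_D': "\<And>i. i < n \<Longrightarrow> i \<notin> D \<Longrightarrow> ?h' i + inner w' (pt i) > \<mu>'"
      by (rule in_regular_subdivision_imp_supporting_affine) blast
    have "h i + inner w' (pt i) = \<mu>'" if "i \<in> D" for i
      using on_D'[of i] that D_subset j(2) by (auto split: if_splits)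
    then have "w' = w" "\<mu>' = \<mu>" using affine_on_simplex_unique[OF _ on_D, of w' \<mu>'] by blast+
    then show ?thesis using off_D'[OF j] by simp
  qed
  ultimately show thesis using that by blast
qed

lemma solution_of_cell:
  assumes cell: "\<And>j. j \<in> D \<Longrightarrow> h j + inner w (pt j) = \<mu>"
    and gap: "\<And>j. j < n \<Longrightarrow> j \<notin> D \<Longrightarrow> \<mu> + gap_bound \<le> h j + inner w (pt j)"
    and \<gamma>: "\<And>j. j < n \<Longrightarrow> \<gamma> j = exp (- h j)"
  obtains x where "nondegenerate_positive_solution n a C \<gamma> x"
    and "\<And>i j. i \<in> D \<Longrightarrow> j < n \<Longrightarrow> j \<notin> D \<Longrightarrow> \<gamma> j * monom x (a j) < \<gamma> i * monom x (a i)"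
proof -
  interpret weighted_simplex n a C D "\<lambda>j. h j + inner w (pt j) - \<mu>"
  proof
    show "h j + inner w (pt j) - \<mu> = 0" if "j \<in> D" for j using cell[OF that] by simp
    show "gap_bound \<le> h j + inner w (pt j) - \<mu>" if "j < n" "j \<notin> D" for j
      using gap[OF that] by simp
  qed
  obtain z where z: "norm z \<le> R0" "log_system z = 0" by (rule log_system_has_zero)
  define x where "x = (\<chi> k. exp ((z - w) $ k))"
  have x_pos: "\<forall>k. x $ k > 0" unfolding x_def by simp
  have monom_term: "\<gamma> j * monom x (a j) = exp (- \<mu>) * log_term j z" if "j < n" for j
  proof -
    have "\<gamma> j * monom x (a j) = exp (- h j + inner (pt j) (z - w))"
      unfolding x_def monom_exp \<gamma>[OF that] by (simp add: mult_exp_exp)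
    then show ?thesis
      unfolding log_term_def
      by (simp add: mult_exp_exp inner_diff_right inner_commute algebra_simps)
  qed
  have "nondegenerate_positive_solution n a C \<gamma> x"
    using nondegenerate_solution_of_log_zero[OF z x_pos _ monom_term] by simp
  moreover have "\<gamma> j * monom x (a j) < \<gamma> i * monom x (a i)" if "i \<in> D" "j < n" "j \<notin> D" for i j
    using cell_terms_dominate[OF z(1) that] monom_term[of i] monom_term[of j] that D_subset by auto
  ultimately show thesis using that by blast
qed

lemma solution_of_cone:
  fixes m :: "nat \<Rightarrow> nat \<Rightarrow> real"
  assumes cone: "\<And>h'. (\<forall>r<l. (\<Sum>j<n. m r j * h' j) > 0) \<Longrightarrow> in_regular_subdivision n a h' D"
    and margin: "\<And>r. r < l \<Longrightarrow> L * (1 + (\<Sum>r<l. \<Sum>j<n. \<bar>m r j\<bar>)) < (\<Sum>j<n. m r j * h j)"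
    and L: "gap_bound \<le> L" "0 \<le> L"
    and \<gamma>: "\<And>j. j < n \<Longrightarrow> \<gamma> j = exp (- h j)"
  obtains x where "nondegenerate_positive_solution n a C \<gamma> x"
    and "\<And>i j. i \<in> D \<Longrightarrow> j < n \<Longrightarrow> j \<notin> D \<Longrightarrow> \<gamma> j * monom x (a j) < \<gamma> i * monom x (a i)"
proof (rule cell_gap_from_cone[OF cone margin L(2)])
  fix w \<mu>
  assume on_D: "\<And>j. j \<in> D \<Longrightarrow> h j + inner w (pt j) = \<mu>"
    and off_D: "\<And>j. j < n \<Longrightarrow> j \<notin> D \<Longrightarrow> \<mu> + L \<le> h j + inner w (pt j)"
  have "\<mu> + gap_bound \<le> h j + inner w (pt j)" if "j < n" "j \<notin> D" for j
    using off_D[OF that] L(1) by linarith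
  then show thesis using that solution_of_cell[OF on_D _ \<gamma>] by blast
qed

end

lemma powr_bound_imp_sum_ln_bound:
  fixes m :: "nat \<Rightarrow> nat \<Rightarrow> real" and \<epsilon> :: "nat \<Rightarrow> real"
  assumes \<gamma>: "\<forall>j<n. \<gamma> j > 0" and \<delta>: "0 < \<delta>" "\<delta> \<le> 1"
    and \<epsilon>: "\<forall>r<l. 0 < \<epsilon> r \<and> \<epsilon> r < 1" and r: "r < l"
    and bound: "(\<Prod>j<n. \<gamma> j powr m r j) < (\<delta> powr (\<Sum>r<l. 1 / \<epsilon> r)) powr \<epsilon> r"
  shows "(\<Sum>j<n. m r j * ln (\<gamma> j)) < ln \<delta>"
proof -
  have "1 / \<epsilon> r \<le> (\<Sum>r<l. 1 / \<epsilon> r)"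
    using r \<epsilon> by (intro member_le_sum) (auto intro: less_imp_le)
  then have "1 \<le> (\<Sum>r<l. 1 / \<epsilon> r) * \<epsilon> r" using \<epsilon> r by (simp add: divide_le_eq)
  then have "(\<delta> powr (\<Sum>r<l. 1 / \<epsilon> r)) powr \<epsilon> r \<le> \<delta>"
    unfolding powr_powr using powr_mono'[of 1 _ \<delta>] \<delta> by simp
  then have "(\<Prod>j<n. \<gamma> j powr m r j) < \<delta>" using bound by linarith
  moreover have "(\<Prod>j<n. \<gamma> j powr m r j) > 0" using \<gamma> by (intro prod_pos) auto
  ultimately have "ln (\<Prod>j<n. \<gamma> j powr m r j) < ln \<delta>" by simp
  moreover have "ln (\<Prod>j<n. \<gamma> j powr m r j) = (\<Sum>j<n. m r j * ln (\<gamma> j))"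
    using \<gamma> by (subst ln_prod) (auto simp: ln_powr)
  ultimately show ?thesis by simp
qed

lemma inj_on_if_dominant_sets:
  fixes g :: "'x \<Rightarrow> 'j \<Rightarrow> real"
  assumes inj: "inj_on \<Delta> K"
    and finite: "\<And>k. k \<in> K \<Longrightarrow> finite (\<Delta> k)"
    and card: "\<And>k k'. k \<in> K \<Longrightarrow> k' \<in> K \<Longrightarrow> card (\<Delta> k) = card (\<Delta> k')"
    and dominant: "\<And>k i j. k \<in> K \<Longrightarrow> i \<in> \<Delta> k \<Longrightarrow> j \<in> U - \<Delta> k \<Longrightarrow> g (x k) j < g (x k) i"
    and subset: "\<And>k. k \<in> K \<Longrightarrow> \<Delta> k \<subseteq> U"
  shows "inj_on x K"
proof (rule inj_onI, rule ccontr)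
  fix k k' assume k: "k \<in> K" "k' \<in> K" and "x k = x k'" "k \<noteq> k'"
  then have "\<Delta> k \<noteq> \<Delta> k'" using inj by (auto dest: inj_onD)
  then obtain i j where "i \<in> \<Delta> k - \<Delta> k'" "j \<in> \<Delta> k' - \<Delta> k"
    using card_subset_eq[OF finite] card k by (metis Diff_eq_empty_iff ex_in_conv)
  then have "g (x k) j < g (x k) i" and "g (x k') i < g (x k') j"
    using dominant subset k by blast+
  then show False using \<open>x k = x k'\<close> by simp
qed

lemma positive_solutions_of_height_margin:
  fixes m :: "nat \<Rightarrow> nat \<Rightarrow> real" and a :: "nat \<Rightarrow> int^'d::finite"
  assumes inj_a: "inj_on a {..<n}"
    and simplices: "\<And>k. k < p \<Longrightarrow> is_simplex n a (\<Delta> k)"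
    and distinct_simplices: "inj_on \<Delta> {..<p}"
    and pos_dec: "\<And>k. k < p \<Longrightarrow> positively_decorated C (\<Delta> k)"
    and cone: "\<And>h. \<forall>r<l. (\<Sum>j<n. m r j * h j) > 0 \<Longrightarrow> \<forall>k<p. in_regular_subdivision n a h (\<Delta> k)"
    and L: "\<And>k. k < p \<Longrightarrow> decorated_simplex.gap_bound n a C (\<Delta> k) \<le> L" "0 \<le> L"
    and \<gamma>: "\<forall>j<n. \<gamma> j > 0"
    and margin: "\<And>r. r < l \<Longrightarrow> L * (1 + (\<Sum>r<l. \<Sum>j<n. \<bar>m r j\<bar>)) < (\<Sum>j<n. m r j * - ln (\<gamma> j))"
  shows "\<exists>X. finite X \<and> card X = p \<and> (\<forall>x\<in>X. nondegenerate_positive_solution n a C \<gamma> x)"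
proof -
  have simplex_k: "decorated_simplex n a C (\<Delta> k)" if "k < p" for k
    using inj_a simplices[OF that] pos_dec[OF that] by unfold_locales
  have "\<exists>x. nondegenerate_positive_solution n a C \<gamma> x \<and>
          (\<forall>i\<in>\<Delta> k. \<forall>j\<in>{..<n} - \<Delta> k. \<gamma> j * monom x (a j) < \<gamma> i * monom x (a i))" if k: "k < p" for k
  proof -
    obtain x where "nondegenerate_positive_solution n a C \<gamma> x"
      and "\<And>i j. i \<in> \<Delta> k \<Longrightarrow> j < n \<Longrightarrow> j \<notin> \<Delta> k \<Longrightarrow> \<gamma> j * monom x (a j) < \<gamma> i * monom x (a i)"
    proof (rule decorated_simplex.solution_of_cone[OF simplex_k[OF k] _ margin L(1)[OF k] L(2)])
      show "in_regular_subdivision n a h (\<Delta> k)" if "\<forall>r<l. (\<Sum>j<n. m r j * h j) > 0" for h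
        using cone that k by blast
      show "\<gamma> j = exp (- (- ln (\<gamma> j)))" if "j < n" for j
        using \<gamma> that by simp
    qed blast+
    then show ?thesis by blast
  qed
  then obtain xs where xs: "\<forall>k\<in>{..<p}. nondegenerate_positive_solution n a C \<gamma> (xs k) \<and>
      (\<forall>i\<in>\<Delta> k. \<forall>j\<in>{..<n} - \<Delta> k. \<gamma> j * monom (xs k) (a j) < \<gamma> i * monom (xs k) (a i))"
    using bchoice[of "{..<p}"] by (metis lessThan_iff)
  have "inj_on xs {..<p}"
  proof (rule inj_on_if_dominant_sets[where g = "\<lambda>x j. \<gamma> j * monom x (a j)" and U = "{..<n}"])
    show "inj_on \<Delta> {..<p}" by (rule distinct_simplices)
  qed (use xs decorated_simplex.finite_D[OF simplex_k] decorated_simplex.card_D[OF simplex_k]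
         decorated_simplex.D_subset[OF simplex_k] in auto)
  then show ?thesis
    using xs by (intro exI[of _ "xs ` {..<p}"]) (auto simp: card_image)
qed

theorem theorem2p11:
  fixes n p l :: nat
    and a :: "nat \<Rightarrow> int^'d"
    and C :: "nat \<Rightarrow> real^'d"
    and \<Delta> :: "nat \<Rightarrow> nat set"
    and m :: "nat \<Rightarrow> nat \<Rightarrow> real"
  assumes distinct_pts: "inj_on a {..<n}"
    and n_ge: "n \<ge> CARD('d) + 2"
    and full_dim: "aff_dim (convex hull (real_pt ` a ` {..<n})) = int CARD('d)"
    and simplices: "\<And>k. k < p \<Longrightarrow> is_simplex n a (\<Delta> k)"
    and distinct_simplices: "inj_on \<Delta> {..<p}"
    and common_subdiv: "\<exists>h. \<forall>k<p. in_regular_subdivision n a h (\<Delta> k)"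
    and pos_dec: "\<And>k. k < p \<Longrightarrow> positively_decorated C (\<Delta> k)"
    and cone: "\<And>h. (\<forall>k<p. in_regular_subdivision n a h (\<Delta> k)) \<longleftrightarrow>
                     (\<forall>r<l. (\<Sum>j<n. m r j * h j) > 0)"
  shows "\<exists>t0 :: (nat \<Rightarrow> real) \<Rightarrow> real.
           (\<forall>\<epsilon>. (\<forall>r<l. 0 < \<epsilon> r \<and> \<epsilon> r < 1) \<longrightarrow> t0 \<epsilon> > 0) \<and>
           (\<forall>\<gamma>. (\<forall>j<n. \<gamma> j > 0) \<and>
                 (\<exists>\<epsilon>. (\<forall>r<l. 0 < \<epsilon> r \<and> \<epsilon> r < 1) \<and>
                      (\<forall>r<l. (\<Prod>j<n. \<gamma> j powr m r j) < t0 \<epsilon> powr \<epsilon> r))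
             \<longrightarrow> (\<exists>X. finite X \<and> card X = p \<and>
                     (\<forall>x\<in>X. nondegenerate_positive_solution n a C \<gamma> x)))"
proof -
  \<comment> \<open>\<open>n_ge\<close>, \<open>full_dim\<close> and \<open>common_subdiv\<close> are not needed: the description \<open>cone\<close> of the
    cone already provides the heights.\<close>
  let ?gap = "\<lambda>k. decorated_simplex.gap_bound n a C (\<Delta> k)"
  define L where "L = 1 + (\<Sum>k<p. \<bar>?gap k\<bar>)"
  define \<delta> where "\<delta> = exp (- (L * (1 + (\<Sum>r<l. \<Sum>j<n. \<bar>m r j\<bar>))))"
  define t0 where "t0 \<epsilon> = \<delta> powr (\<Sum>r<l. 1 / \<epsilon> r)" for \<epsilon> :: "nat \<Rightarrow> real"
  have L: "?gap k \<le> L" if "k < p" for k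
    using member_le_sum[of k "{..<p}" "\<lambda>k. \<bar>?gap k\<bar>"] that unfolding L_def by auto
  have "0 \<le> L" unfolding L_def by (simp add: sum_nonneg add_nonneg_nonneg)
  have \<delta>: "0 < \<delta>" "\<delta> \<le> 1" using \<open>0 \<le> L\<close> unfolding \<delta>_def by (auto simp: sum_nonneg)
  show ?thesis
  proof (intro exI[of _ t0] conjI allI impI)
    show "t0 \<epsilon> > 0" for \<epsilon> unfolding t0_def using \<delta> by simp
  next
    fix \<gamma> :: "nat \<Rightarrow> real"
    assume "(\<forall>j<n. \<gamma> j > 0) \<and> (\<exists>\<epsilon>. (\<forall>r<l. 0 < \<epsilon> r \<and> \<epsilon> r < 1) \<and>
              (\<forall>r<l. (\<Prod>j<n. \<gamma> j powr m r j) < t0 \<epsilon> powr \<epsilon> r))"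
    then obtain \<epsilon> where \<gamma>: "\<forall>j<n. \<gamma> j > 0" and \<epsilon>: "\<forall>r<l. 0 < \<epsilon> r \<and> \<epsilon> r < 1"
      and bound: "\<forall>r<l. (\<Prod>j<n. \<gamma> j powr m r j) < t0 \<epsilon> powr \<epsilon> r" by blast
    show "\<exists>X. finite X \<and> card X = p \<and> (\<forall>x\<in>X. nondegenerate_positive_solution n a C \<gamma> x)"
    proof (rule positive_solutions_of_height_margin
        [OF distinct_pts simplices distinct_simplices pos_dec _ L \<open>0 \<le> L\<close> \<gamma>])
      show "\<forall>k<p. in_regular_subdivision n a h (\<Delta> k)" if "\<forall>r<l. (\<Sum>j<n. m r j * h j) > 0" for h
        using cone that by blast
      show "L * (1 + (\<Sum>r<l. \<Sum>j<n. \<bar>m r j\<bar>)) < (\<Sum>j<n. m r j * - ln (\<gamma> j))" if "r < l" for r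
        using powr_bound_imp_sum_ln_bound[OF \<gamma> \<delta> \<epsilon> that, of m] bound that
        unfolding \<delta>_def t0_def by (simp add: sum_negf)
    qed
  qed
qed

end
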